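(* Let $C$ and $D$ be $R$-linear codes of length $n$. Then \[ \mathrm{CJ}^{\mathrm{av}}_{C,D}(x_{ij}\ \text{with}\ i,j\in K)=\sum_{\eta}A_r^C\,A_s^D\,\frac{\prod_{i=0}^{|R|-1}\binom{s_i}{\eta_{\omega_0\omega_i},\dots,\eta_{\omega_{|R|-1}\omega_i}}}{\binom{n}{r_0,\dots,r_{|R|-1}}}\prod_{i,j=0}^{|R|-1}x_{ij}^{\eta_{\omega_i\omega_j}}. \] The sum runs over all bi-compositions $\eta=(\eta_{\alpha\beta})_{(\alpha,\beta)\in R^2}$ of $n$, i.e. non-negative integers with $\sum_{\alpha,\beta}\eta_{\alpha\beta}=n$. For each $\eta$, the compositions $r,s$ of $n$ are determined by \[ r_i=\sum_{\beta\in R}\eta_{\omega_i\beta},\qquad s_i=\sum_{\alpha\in R}\eta_{\alpha\omega_i}\qquad (i\in K). \]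
   Context: $R$ denotes either the finite field $\mathbb F_q$ or the ring $\mathbb Z_k$ ($k\ge2$). Its elements are listed in a fixed order $0=\omega_0,\dots,\omega_{|R|-1}$, and $K=\{0,\dots,|R|-1\}$. An $R$-linear code of length $n$ is an $\mathbb F_q$-subspace of $\mathbb F_q^n$, respectively an additive subgroup of $\mathbb Z_k^n$. A composition of $n$ is a vector $s=(s_0,\dots,s_{|R|-1})$ of non-negative integers summing to $n$. For $u\in R^n$, $\mathrm{comp}(u)=(s_0(u),\dots,s_{|R|-1}(u))$, where $s_i(u)$ is the number of coordinates of $u$ equal to $\omega_i$. $A_s^C$ denotes the number of $u\in C$ with $\mathrm{comp}(u)=s$. For $u,v\in R^n$, $\eta_{\alpha\beta}(u,v)=\#\{i:(u_i,v_i)=(\alpha,\beta)\}$. The complete joint weight enumerator is \[ \mathrm{CJE}_{C,D}(x_{ij})=\sum_{u\in C,v\in D}\prod_{i,j}x_{ij}^{\eta_{\omega_i\omega_j}(u,v)}. \] For $\sigma\in S_n$, set $u^\sigma=(u_{\sigma(1)},\dots,u_{\sigma(n)})$ and $C^\sigma=\{u^\sigma:u\in C\}$. The average complete joint weight enumerator is \[ \mathrm{CJ}^{\mathrm{av}}_{C,D}(x_{ij})=\frac1{n!}\sum_{\sigma\in S_n}\mathrm{CJE}_{C^\sigma,D}(x_{ij}). \] The multinomial coefficient is $\binom{a}{b_0,\dots,b_m}=a!/(b_0!\cdots b_m!)$. *)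

theory Defs
  imports Main "HOL-Combinatorics.Permutations" Complex_Main
begin

text \<open>Alphabet: a finite commutative ring 'a which is either a finite field F_q
  (every nonzero element invertible) or a ring Z_k (every element is a multiple of 1;
  k \<ge> 2 holds since 0 \<noteq> 1).
  The fixed ordering of the alphabet is omega, a bijection {0..<card (UNIV :: 'a set)} \<rightarrow> UNIV
  with omega 0 = 0.  Indices i in K = {0..<card (UNIV :: 'a set)} stand for omega i.\<close>

definition is_Fq_or_Zk :: "'a::{finite,comm_ring_1} itself \<Rightarrow> bool" where
  "is_Fq_or_Zk _ \<longleftrightarrow>
     (\<forall>a::'a. a \<noteq> 0 \<longrightarrow> (\<exists>b. a * b = 1)) \<or> (\<forall>a::'a. \<exists>m::nat. a = of_nat m)"

definition alphabet_order :: "(nat \<Rightarrow> 'a::{finite,zero}) \<Rightarrow> bool" where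
  "alphabet_order (\<omega> :: nat \<Rightarrow> 'a) \<longleftrightarrow> bij_betw \<omega> {0..<card (UNIV :: 'a set)} (UNIV :: 'a set) \<and> \<omega> 0 = 0"

text \<open>R-linear code of length n: an R-submodule of R^n (for F_q a subspace; for Z_k this is
  exactly an additive subgroup).\<close>
definition linear_code :: "nat \<Rightarrow> 'a::comm_ring_1 list set \<Rightarrow> bool" where
  "linear_code n C \<longleftrightarrow> C \<subseteq> {u. length u = n} \<and> replicate n 0 \<in> C \<and>
     (\<forall>u\<in>C. \<forall>v\<in>C. map2 (+) u v \<in> C) \<and> (\<forall>c. \<forall>u\<in>C. map ((*) c) u \<in> C)"

definition comp :: "(nat \<Rightarrow> 'a::finite) \<Rightarrow> 'a list \<Rightarrow> nat \<Rightarrow> nat" where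
  "comp (\<omega> :: nat \<Rightarrow> 'a) u i = (if i < card (UNIV :: 'a set) then card {p. p < length u \<and> u ! p = \<omega> i} else 0)"

definition A_count :: "(nat \<Rightarrow> 'a::finite) \<Rightarrow> 'a list set \<Rightarrow> (nat \<Rightarrow> nat) \<Rightarrow> nat" where
  "A_count \<omega> C s = card {u \<in> C. comp \<omega> u = s}"

definition eta :: "(nat \<Rightarrow> 'a) \<Rightarrow> 'a list \<Rightarrow> 'a list \<Rightarrow> nat \<Rightarrow> nat \<Rightarrow> nat" where
  "eta \<omega> u v i j = card {p. p < length u \<and> u ! p = \<omega> i \<and> v ! p = \<omega> j}"

definition CJE :: "(nat \<Rightarrow> 'a::finite) \<Rightarrow> 'a list set \<Rightarrow> 'a list set \<Rightarrow> (nat \<Rightarrow> nat \<Rightarrow> real) \<Rightarrow> real" where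
  "CJE (\<omega> :: nat \<Rightarrow> 'a) C D x = (\<Sum>u\<in>C. \<Sum>v\<in>D. \<Prod>i<card (UNIV :: 'a set). \<Prod>j<card (UNIV :: 'a set). x i j ^ eta \<omega> u v i j)"

text \<open>u^sigma = (u_{sigma(1)},...,u_{sigma(n)}), 0-indexed.\<close>
definition perm_word :: "(nat \<Rightarrow> nat) \<Rightarrow> 'a list \<Rightarrow> 'a list" where
  "perm_word \<sigma> u = map (\<lambda>i. u ! \<sigma> i) [0..<length u]"

definition CJ_av :: "(nat \<Rightarrow> 'a::finite) \<Rightarrow> nat \<Rightarrow> 'a list set \<Rightarrow> 'a list set \<Rightarrow> (nat \<Rightarrow> nat \<Rightarrow> real) \<Rightarrow> real" where
  "CJ_av \<omega> n C D x = (1 / fact n) *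
     (\<Sum>\<sigma>\<in>{\<sigma>. \<sigma> permutes {0..<n}}. CJE \<omega> (perm_word \<sigma> ` C) D x)"

text \<open>Bi-compositions of n over K x K (eta i j stands for eta_{omega_i omega_j}).\<close>
definition bicomps :: "nat \<Rightarrow> nat \<Rightarrow> (nat \<Rightarrow> nat \<Rightarrow> nat) set" where
  "bicomps m n = {\<eta>. (\<forall>i j. (m \<le> i \<or> m \<le> j) \<longrightarrow> \<eta> i j = 0) \<and> (\<Sum>i<m. \<Sum>j<m. \<eta> i j) = n}"

definition multinom :: "nat \<Rightarrow> nat \<Rightarrow> (nat \<Rightarrow> nat) \<Rightarrow> real" where
  "multinom a m b = fact a / (\<Prod>i<m. fact (b i))"

end

(* Averaging over all permutations sigma replaces the permuted word u^sigma by a uniformly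
   random rearrangement w of u, because every rearrangement arises from the same number of
   permutations.  For fixed v, the word w has joint composition eta with v exactly when, for every
   letter omega_j, the letters of w at the positions where v reads omega_j form the multiset with
   counts eta_{0j}, ..., eta_{|R|-1,j}.  These multisets can be arranged independently, giving
   prod_j multinomial(s_j; eta_{.j}) such words, while u has multinomial(n; r) rearrangements;
   both counts only matter when comp u = r and comp v = s.  Summing over u in C and v in D then
   produces the factor A_r^C A_s^D. *)

theory Submission
  imports Defs "HOL-Combinatorics.Multiset_Permutations" "HOL-Library.Cardinality"
begin

definition column :: "'a list \<Rightarrow> 'b list \<Rightarrow> 'b \<Rightarrow> 'a multiset" where
  "column w v b = mset (map fst (filter (\<lambda>p. snd p = b) (zip w v)))"

lemma column_Nil [simp]: "column [] v b = {#}"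
  by (simp add: column_def)

lemma column_Cons_Cons [simp]:
  "column (a # w) (c # v) b = (if c = b then add_mset a (column w v b) else column w v b)"
  by (simp add: column_def)

lemma set_subset_UN_column: "length w = length v \<Longrightarrow> set w \<subseteq> (\<Union>b\<in>set v. set_mset (column w v b))"
proof (induction w v rule: list_induct2)
  case (Cons a w c v)
  have "column w v b \<subseteq># column (a # w) (c # v) b" for b
    by simp
  then show ?case
    using Cons.IH by (fastforce dest: mset_subset_eqD)
qed simp

lemma finite_words_with_columns: "finite {w. length w = length v \<and> (\<forall>b. column w v b = c b)}"
proof (rule finite_subset)
  show "{w. length w = length v \<and> (\<forall>b. column w v b = c b)} \<subseteq>
      {w. set w \<subseteq> (\<Union>b\<in>set v. set_mset (c b)) \<and> length w = length v}"
    using set_subset_UN_column by fastforce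
qed (simp add: finite_lists_length_eq)

lemma card_permutations_of_multiset_conv_sum:
  assumes "A \<noteq> {#}"
  shows "card (permutations_of_multiset A) =
    (\<Sum>a\<in>set_mset A. card (permutations_of_multiset (A - {#a#})))"
  unfolding permutations_of_multiset_nonempty[OF assms]
  by (subst card_UN_disjoint) (auto simp: card_image)

lemma card_words_with_columns:
  assumes "finite B" "set v \<subseteq> B" "\<And>b. size (c b) = count (mset v) b"
  shows "card {w. length w = length v \<and> (\<forall>b. column w v b = c b)} =
    (\<Prod>b\<in>B. card (permutations_of_multiset (c b)))"
  using assms(2,3)
proof (induction v arbitrary: c)
  case Nil
  then have "c b = {#}" for b by simp
  then show ?case by (simp cong: conj_cong)
next
  case (Cons b v)
  let ?S = "\<lambda>v c. {w. length w = length v \<and> (\<forall>b. column w v b = c b)}"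
  define c' where "c' a = c(b := c b - {#a#})" for a
  have b: "b \<in> B" and v: "set v \<subseteq> B" using Cons.prems(1) by auto
  have nonempty: "c b \<noteq> {#}" using Cons.prems(2)[of b] by auto
  have split: "?S (b # v) c = (\<Union>a\<in>set_mset (c b). (#) a ` ?S v (c' a))"
  proof (intro equalityI subsetI)
    fix w assume "w \<in> ?S (b # v) c"
    then obtain a w' where w: "w = a # w'" "length w' = length v"
      and columns: "\<forall>b'. column (a # w') (b # v) b' = c b'" by (cases w) auto
    have cb: "c b = add_mset a (column w' v b)"
      using columns by (metis column_Cons_Cons)
    have "column w' v b' = c b'" if "b' \<noteq> b" for b'
      using columns that by (metis column_Cons_Cons)
    then have "w' \<in> ?S v (c' a)"
      using w(2) by (auto simp: c'_def cb)
    then show "w \<in> (\<Union>a\<in>set_mset (c b). (#) a ` ?S v (c' a))"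
      using w(1) cb by auto
  qed (auto simp: c'_def)
  have "card (?S (b # v) c) = (\<Sum>a\<in>set_mset (c b). card (?S v (c' a)))"
    unfolding split
    by (subst card_UN_disjoint) (auto simp: card_image finite_words_with_columns)
  also have "\<dots> = (\<Sum>a\<in>set_mset (c b). \<Prod>b'\<in>B. card (permutations_of_multiset (c' a b')))"
    using Cons.prems(2) by (intro sum.cong refl Cons.IH v) (auto simp: c'_def size_Diff_submset)
  also have "\<dots> = (\<Sum>a\<in>set_mset (c b). card (permutations_of_multiset (c b - {#a#}))) *
      (\<Prod>b'\<in>B - {b}. card (permutations_of_multiset (c b')))"
    unfolding sum_distrib_right using b assms(1)
    by (intro sum.cong refl) (simp add: prod.remove c'_def)
  also have "\<dots> = (\<Prod>b'\<in>B. card (permutations_of_multiset (c b')))"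
    using b assms(1) by (simp add: card_permutations_of_multiset_conv_sum[OF nonempty] prod.remove)
  finally show ?case .
qed

lemma card_permute_list_fiber:
  assumes "mset w = mset u"
  shows "card {\<sigma>. \<sigma> permutes {..<length u} \<and> permute_list \<sigma> u = w} =
    card {\<sigma>. \<sigma> permutes {..<length u} \<and> permute_list \<sigma> u = u}"
proof -
  obtain \<tau> where \<tau>: "\<tau> permutes {..<length u}" "permute_list \<tau> u = w"
    using mset_eq_permutation[OF assms] .
  have inv_\<tau>: "inv \<tau> permutes {..<length u}"
    using \<tau>(1) by (rule permutes_inv)
  have "permute_list (inv \<tau>) w = u"
    using \<tau> permute_list_compose[OF inv_\<tau>, of \<tau>] by (simp add: permutes_inv_o(1))
  then have "bij_betw (\<lambda>\<sigma>. \<sigma> \<circ> \<tau>)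
      {\<sigma>. \<sigma> permutes {..<length u} \<and> permute_list \<sigma> u = u}
      {\<sigma>. \<sigma> permutes {..<length u} \<and> permute_list \<sigma> u = w}"
    using \<tau> inv_\<tau>
    by (intro bij_betw_byWitness[where f' = "\<lambda>\<rho>. \<rho> \<circ> inv \<tau>"])
      (auto simp: comp_assoc permutes_inv_o permutes_compose permute_list_compose)
  then show ?thesis
    by (rule bij_betw_same_card[symmetric])
qed

lemma sum_permute_list_divide_fact:
  fixes h :: "'a list \<Rightarrow> 'b::field_char_0"
  shows "(\<Sum>\<sigma> | \<sigma> permutes {..<length u}. h (permute_list \<sigma> u)) / fact (length u) =
    (\<Sum>w\<in>permutations_of_multiset (mset u). h w) / of_nat (card (permutations_of_multiset (mset u)))"
proof -
  let ?P = "{\<sigma>. \<sigma> permutes {..<length u}}"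
  define stab where "stab = card {\<sigma>. \<sigma> permutes {..<length u} \<and> permute_list \<sigma> u = u}"
  have fiber: "(\<Sum>\<sigma>\<in>{\<sigma>\<in>?P. permute_list \<sigma> u = w}. g (permute_list \<sigma> u)) = of_nat stab * g w"
    if "w \<in> permutations_of_multiset (mset u)" for g :: "'a list \<Rightarrow> 'b" and w
  proof -
    have "(\<Sum>\<sigma>\<in>{\<sigma>\<in>?P. permute_list \<sigma> u = w}. g (permute_list \<sigma> u)) =
        (\<Sum>\<sigma>\<in>{\<sigma>. \<sigma> permutes {..<length u} \<and> permute_list \<sigma> u = w}. g w)"
      by (rule sum.cong) auto
    moreover have "card {\<sigma>. \<sigma> permutes {..<length u} \<and> permute_list \<sigma> u = w} = stab"
      unfolding stab_def by (rule card_permute_list_fiber[OF permutations_of_multisetD[OF that]])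
    ultimately show ?thesis
      by simp
  qed
  have regroup: "(\<Sum>\<sigma>\<in>?P. g (permute_list \<sigma> u)) =
      of_nat stab * (\<Sum>w\<in>permutations_of_multiset (mset u). g w)" for g :: "'a list \<Rightarrow> 'b"
  proof -
    have "(\<Sum>\<sigma>\<in>?P. g (permute_list \<sigma> u)) =
        (\<Sum>w\<in>permutations_of_multiset (mset u).
          \<Sum>\<sigma>\<in>{\<sigma>\<in>?P. permute_list \<sigma> u = w}. g (permute_list \<sigma> u))"
      by (rule sum.group[symmetric])
        (simp_all add: finite_permutations image_subset_iff permutations_of_multisetI)
    also have "\<dots> = (\<Sum>w\<in>permutations_of_multiset (mset u). of_nat stab * g w)"
      by (rule sum.cong[OF refl fiber])
    finally show ?thesis
      by (simp add: sum_distrib_left)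
  qed
  have "fact (length u) = (of_nat (card ?P) :: 'b)"
    using card_permutations[of "{..<length u}" "length u"] by simp
  also have "\<dots> = (\<Sum>\<sigma>\<in>?P. 1)"
    by simp
  also have "\<dots> = of_nat stab * of_nat (card (permutations_of_multiset (mset u)))"
    using regroup[of "\<lambda>_. 1"] by simp
  finally have fact_eq:
    "fact (length u) = of_nat stab * (of_nat (card (permutations_of_multiset (mset u))) :: 'b)" .
  have "stab > 0"
    unfolding stab_def card_gt_0_iff using finite_permutations[of "{..<length u}"]
    by (auto intro!: exI[where x = id])
  then have "(of_nat stab :: 'b) \<noteq> 0"
    by simp
  then show ?thesis
    unfolding regroup fact_eq by (rule nonzero_mult_divide_mult_cancel_left)
qed

lemma inj_on_permute_list:
  assumes "\<sigma> permutes {..<n}"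
  shows "inj_on (permute_list \<sigma>) {xs. length xs = n}"
proof (rule inj_onI)
  have inverse: "permute_list (inv \<sigma>) (permute_list \<sigma> zs) = zs"
    if "length zs = n" for zs :: "'a list"
  proof -
    have "inv \<sigma> permutes {..<length zs}"
      using permutes_inv[OF assms] that by simp
    then have "permute_list (\<sigma> \<circ> inv \<sigma>) zs = permute_list (inv \<sigma>) (permute_list \<sigma> zs)"
      by (rule permute_list_compose)
    then show ?thesis
      by (simp add: permutes_inv_o(1)[OF assms])
  qed
  fix xs ys :: "'a list"
  assume "xs \<in> {xs. length xs = n}" "ys \<in> {xs. length xs = n}"
    and "permute_list \<sigma> xs = permute_list \<sigma> ys"
  then show "xs = ys"
    by (metis (full_types) inverse mem_Collect_eq)
qed

lemma perm_word_eq_permute_list: "perm_word = permute_list"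
  by (simp add: fun_eq_iff perm_word_def permute_list_def)

lemma multinom_cong:
  "a = a' \<Longrightarrow> m = m' \<Longrightarrow> (\<And>i. i < m' \<Longrightarrow> b i = b' i) \<Longrightarrow> multinom a m b = multinom a' m' b'"
  unfolding multinom_def by (metis (mono_tags, lifting) lessThan_iff prod.cong)

lemma finite_bicomps: "finite (bicomps m n)"
proof -
  have bounded: "\<eta> i j \<le> n" if "\<eta> \<in> bicomps m n" "i < m" "j < m" for \<eta> i j
  proof -
    have "\<eta> i j \<le> (\<Sum>j<m. \<eta> i j)"
      using that by (intro member_le_sum) auto
    also have "\<dots> \<le> (\<Sum>i<m. \<Sum>j<m. \<eta> i j)"
      using that by (intro member_le_sum[where f = "\<lambda>i. \<Sum>j<m. \<eta> i j"]) auto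
    finally show ?thesis
      using that by (simp add: bicomps_def)
  qed
  let ?F = "{g. \<forall>j. (j \<in> {..<m} \<longrightarrow> g j \<in> {..n}) \<and> (j \<notin> {..<m} \<longrightarrow> g j = 0)}"
  have "bicomps m n \<subseteq> {\<eta>. \<forall>i. (i \<in> {..<m} \<longrightarrow> \<eta> i \<in> ?F) \<and> (i \<notin> {..<m} \<longrightarrow> \<eta> i = (\<lambda>_. 0))}"
    using bounded by (auto simp: bicomps_def fun_eq_iff)
  moreover have "finite ?F"
    by (intro finite_set_of_finite_funs) auto
  then have "finite {\<eta>. \<forall>i. (i \<in> {..<m} \<longrightarrow> \<eta> i \<in> ?F) \<and> (i \<notin> {..<m} \<longrightarrow> \<eta> i = (\<lambda>_. 0))}"
    by (intro finite_set_of_finite_funs) auto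
  ultimately show ?thesis
    by (rule finite_subset)
qed

lemma sum_sum_if_conj:
  fixes c :: "'c::comm_semiring_1"
  assumes "finite A" "finite B"
  shows "(\<Sum>a\<in>A. \<Sum>b\<in>B. if P a \<and> Q b then c else 0) =
    of_nat (card {a\<in>A. P a}) * of_nat (card {b\<in>B. Q b}) * c"
proof -
  have "(\<Sum>b\<in>B. if P a \<and> Q b then c else 0) =
      (if P a then of_nat (card {b\<in>B. Q b}) * c else 0)" for a
    using assms(2) by (simp add: sum.If_cases Int_def)
  then show ?thesis
    using assms(1) by (simp add: sum.If_cases Int_def mult.assoc)
qed

(* The paper's eta(w, v), set to zero outside K x K so that it lies in bicomps. *)
definition joint_comp :: "(nat \<Rightarrow> 'a::finite) \<Rightarrow> 'a list \<Rightarrow> 'a list \<Rightarrow> nat \<Rightarrow> nat \<Rightarrow> nat" where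
  "joint_comp \<omega> w v i j = (if i < CARD('a) \<and> j < CARD('a) then eta \<omega> w v i j else 0)"

definition row_sums :: "nat \<Rightarrow> (nat \<Rightarrow> nat \<Rightarrow> nat) \<Rightarrow> nat \<Rightarrow> nat" where
  "row_sums m \<eta> i = (\<Sum>j<m. \<eta> i j)"

definition col_sums :: "nat \<Rightarrow> (nat \<Rightarrow> nat \<Rightarrow> nat) \<Rightarrow> nat \<Rightarrow> nat" where
  "col_sums m \<eta> j = (\<Sum>i<m. \<eta> i j)"

definition bicomp_weight :: "nat \<Rightarrow> nat \<Rightarrow> (nat \<Rightarrow> nat \<Rightarrow> nat) \<Rightarrow> real" where
  "bicomp_weight m n \<eta> =
    (\<Prod>j<m. multinom (col_sums m \<eta> j) m (\<lambda>i. \<eta> i j)) / multinom n m (row_sums m \<eta>)"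

definition joint_monomial :: "nat \<Rightarrow> (nat \<Rightarrow> nat \<Rightarrow> real) \<Rightarrow> (nat \<Rightarrow> nat \<Rightarrow> nat) \<Rightarrow> real" where
  "joint_monomial m x \<eta> = (\<Prod>i<m. \<Prod>j<m. x i j ^ \<eta> i j)"

locale ordered_alphabet =
  fixes \<omega> :: "nat \<Rightarrow> 'a::{finite,zero}"
  assumes alphabet_order: "alphabet_order \<omega>"
begin

lemma bij_betw_omega: "bij_betw \<omega> {..<CARD('a)} UNIV"
  using alphabet_order by (simp add: alphabet_order_def atLeast0LessThan)

lemma omega_eq_iff: "i < CARD('a) \<Longrightarrow> j < CARD('a) \<Longrightarrow> \<omega> i = \<omega> j \<longleftrightarrow> i = j"
  using bij_betw_imp_inj_on[OF bij_betw_omega] by (auto simp: inj_on_def)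

lemma ex_omega: "\<exists>i<CARD('a). \<omega> i = a"
  using bij_betw_imp_surj_on[OF bij_betw_omega] by (metis UNIV_I imageE lessThan_iff)

lemma all_omega_iff: "(\<forall>a. P a) \<longleftrightarrow> (\<forall>i<CARD('a). P (\<omega> i))"
  using ex_omega by metis

lemma prod_omega: "(\<Prod>i<CARD('a). f (\<omega> i)) = (\<Prod>a\<in>UNIV. f a)"
  by (rule prod.reindex_bij_betw[OF bij_betw_omega])

lemma multiset_eq_iff_omega: "A = B \<longleftrightarrow> (\<forall>i<CARD('a). count A (\<omega> i) = count B (\<omega> i))"
  unfolding multiset_eq_iff by (rule all_omega_iff)

lemma card_partition_by_omega:
  "(\<Sum>j<CARD('a). card {p. p < (k::nat) \<and> P p \<and> f p = \<omega> j}) = card {p. p < k \<and> P p}"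
proof -
  have "{p. p < k \<and> P p} \<subseteq> (\<Union>j<CARD('a). {p. p < k \<and> P p \<and> f p = \<omega> j})"
  proof
    fix p assume "p \<in> {p. p < k \<and> P p}"
    moreover obtain j where "j < CARD('a)" "\<omega> j = f p"
      using ex_omega by blast
    ultimately show "p \<in> (\<Union>j<CARD('a). {p. p < k \<and> P p \<and> f p = \<omega> j})"
      by force
  qed
  then have partition: "{p. p < k \<and> P p} = (\<Union>j<CARD('a). {p. p < k \<and> P p \<and> f p = \<omega> j})"
    by blast
  show ?thesis
    unfolding partition using omega_eq_iff by (subst card_UN_disjoint) auto
qed

lemma comp_eq_count: "i < CARD('a) \<Longrightarrow> comp \<omega> w i = count (mset w) (\<omega> i)"
  by (simp add: comp_def count_mset count_list_eq_length_filter length_filter_conv_card eq_commute)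

lemma comp_eq_iff_mset_eq: "comp \<omega> w = comp \<omega> u \<longleftrightarrow> mset w = mset u"
proof -
  have "comp \<omega> w = comp \<omega> u \<longleftrightarrow> (\<forall>i<CARD('a). comp \<omega> w i = comp \<omega> u i)"
    by (auto simp: fun_eq_iff comp_def)
  then show ?thesis
    by (simp add: multiset_eq_iff_omega comp_eq_count)
qed

lemma sum_comp: "(\<Sum>i<CARD('a). comp \<omega> w i) = length w"
  using card_partition_by_omega[of "length w" "\<lambda>_. True" "(!) w"] by (simp add: comp_def)

lemma real_card_permutations_of_multiset:
  "real (card (permutations_of_multiset A)) = multinom (size A) CARD('a) (\<lambda>i. count A (\<omega> i))"
proof -
  have "(\<Prod>i<CARD('a). fact (count A (\<omega> i))) = (\<Prod>a\<in>UNIV. fact (count A a) :: real)"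
    by (rule prod_omega)
  also have "\<dots> = (\<Prod>a\<in>set_mset A. fact (count A a))"
    by (rule prod.mono_neutral_right) (auto simp: not_in_iff)
  finally have prod_eq:
    "(\<Prod>i<CARD('a). fact (count A (\<omega> i))) = (\<Prod>a\<in>set_mset A. fact (count A a) :: real)" .
  have "real (card (permutations_of_multiset A)) * (\<Prod>a\<in>set_mset A. fact (count A a)) =
      fact (size A)"
    using arg_cong[OF card_permutations_of_multiset_aux[of A], of real]
    by (simp only: of_nat_mult of_nat_prod of_nat_fact)
  moreover have "(\<Prod>a\<in>set_mset A. fact (count A a) :: real) \<noteq> 0"
    by simp
  ultimately show ?thesis
    unfolding multinom_def prod_eq by (simp add: eq_divide_eq)
qed

lemma eta_eq_count_column:
  "length w = length v \<Longrightarrow> eta \<omega> w v i j = count (column w v (\<omega> j)) (\<omega> i)"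
  unfolding eta_def column_def count_mset
  by (auto simp: count_list_eq_length_filter filter_map length_filter_conv_card
      intro!: arg_cong[where f = card])

lemma row_sums_joint_comp: "row_sums CARD('a) (joint_comp \<omega> w v) = comp \<omega> w"
proof
  fix i
  show "row_sums CARD('a) (joint_comp \<omega> w v) i = comp \<omega> w i"
    using card_partition_by_omega[of "length w" "\<lambda>p. w ! p = \<omega> i" "(!) v"]
    by (simp add: row_sums_def joint_comp_def eta_def comp_def)
qed

lemma col_sums_joint_comp: "length w = length v \<Longrightarrow> col_sums CARD('a) (joint_comp \<omega> w v) = comp \<omega> v"
proof
  fix j assume "length w = length v"
  then show "col_sums CARD('a) (joint_comp \<omega> w v) j = comp \<omega> v j"
    using card_partition_by_omega[of "length v" "\<lambda>p. v ! p = \<omega> j" "(!) w"]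
    by (simp add: col_sums_def joint_comp_def eta_def comp_def conj_commute conj_left_commute)
qed

lemma joint_comp_in_bicomps: "joint_comp \<omega> w v \<in> bicomps CARD('a) (length w)"
proof -
  have "(\<Sum>i<CARD('a). \<Sum>j<CARD('a). joint_comp \<omega> w v i j) = length w"
    using row_sums_joint_comp[of w v] sum_comp[of w] by (simp add: row_sums_def fun_eq_iff)
  then show ?thesis
    by (simp add: bicomps_def joint_comp_def)
qed

definition bicomp_column :: "(nat \<Rightarrow> nat \<Rightarrow> nat) \<Rightarrow> nat \<Rightarrow> 'a multiset" where
  "bicomp_column \<eta> j = (\<Sum>i<CARD('a). replicate_mset (\<eta> i j) (\<omega> i))"

lemma count_bicomp_column:
  assumes "i < CARD('a)"
  shows "count (bicomp_column \<eta> j) (\<omega> i) = \<eta> i j"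
proof -
  have "count (bicomp_column \<eta> j) (\<omega> i) = (\<Sum>i'<CARD('a). if \<omega> i = \<omega> i' then \<eta> i' j else 0)"
    by (simp add: bicomp_column_def count_sum)
  also have "\<dots> = (\<Sum>i'<CARD('a). if i' = i then \<eta> i' j else 0)"
    using assms omega_eq_iff by (intro sum.cong) auto
  finally show ?thesis
    using assms by simp
qed

lemma size_bicomp_column: "size (bicomp_column \<eta> j) = col_sums CARD('a) \<eta> j"
  by (simp add: bicomp_column_def col_sums_def)

lemma joint_comp_eq_iff_columns:
  assumes "length w = length v" "\<eta> \<in> bicomps CARD('a) (length v)"
  shows "joint_comp \<omega> w v = \<eta> \<longleftrightarrow> (\<forall>j<CARD('a). column w v (\<omega> j) = bicomp_column \<eta> j)"
proof -
  have "joint_comp \<omega> w v = \<eta> \<longleftrightarrow> (\<forall>j<CARD('a). \<forall>i<CARD('a). eta \<omega> w v i j = \<eta> i j)"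
    using assms(2) by (auto simp: fun_eq_iff joint_comp_def bicomps_def)
  also have "\<dots> \<longleftrightarrow> (\<forall>j<CARD('a). \<forall>i<CARD('a).
      count (column w v (\<omega> j)) (\<omega> i) = count (bicomp_column \<eta> j) (\<omega> i))"
    using assms(1) by (simp add: eta_eq_count_column count_bicomp_column)
  finally show ?thesis
    by (simp add: multiset_eq_iff_omega)
qed

lemma real_card_words_with_joint_comp:
  assumes "\<eta> \<in> bicomps CARD('a) (length v)" "col_sums CARD('a) \<eta> = comp \<omega> v"
  shows "real (card {w. length w = length v \<and> joint_comp \<omega> w v = \<eta>}) =
    (\<Prod>j<CARD('a). multinom (comp \<omega> v j) CARD('a) (\<lambda>i. \<eta> i j))"
proof -
  define c where "c b = bicomp_column \<eta> (inv_into {..<CARD('a)} \<omega> b)" for b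
  have c_omega: "c (\<omega> j) = bicomp_column \<eta> j" if "j < CARD('a)" for j
    using that bij_betw_imp_inj_on[OF bij_betw_omega] by (simp add: c_def)
  have "joint_comp \<omega> w v = \<eta> \<longleftrightarrow> (\<forall>b. column w v b = c b)" if "length w = length v" for w
    using joint_comp_eq_iff_columns[OF that assms(1)]
    by (simp add: all_omega_iff[of "\<lambda>b. column w v b = c b"] c_omega)
  then have "{w. length w = length v \<and> joint_comp \<omega> w v = \<eta>} =
      {w. length w = length v \<and> (\<forall>b. column w v b = c b)}"
    by blast
  moreover have "size (c b) = count (mset v) b" for b
    using ex_omega[of b] assms(2) by (auto simp: c_omega size_bicomp_column comp_eq_count)
  ultimately have "card {w. length w = length v \<and> joint_comp \<omega> w v = \<eta>} =
      (\<Prod>b\<in>UNIV. card (permutations_of_multiset (c b)))"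
    by (simp add: card_words_with_columns)
  also have "\<dots> = (\<Prod>j<CARD('a). card (permutations_of_multiset (bicomp_column \<eta> j)))"
    by (simp add: prod_omega[symmetric] c_omega)
  finally show ?thesis
    using assms(2)
    by (simp add: real_card_permutations_of_multiset size_bicomp_column count_bicomp_column
        cong: multinom_cong)
qed

lemma real_card_rearrangements_with_joint_comp:
  assumes "length u = length v" "\<eta> \<in> bicomps CARD('a) (length v)"
  shows "real (card {w \<in> permutations_of_multiset (mset u). joint_comp \<omega> w v = \<eta>}) =
    (if comp \<omega> u = row_sums CARD('a) \<eta> \<and> comp \<omega> v = col_sums CARD('a) \<eta>
     then \<Prod>j<CARD('a). multinom (col_sums CARD('a) \<eta> j) CARD('a) (\<lambda>i. \<eta> i j) else 0)"
proof (cases "comp \<omega> u = row_sums CARD('a) \<eta> \<and> comp \<omega> v = col_sums CARD('a) \<eta>")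
  case True
  have "{w \<in> permutations_of_multiset (mset u). joint_comp \<omega> w v = \<eta>} =
      {w. length w = length v \<and> joint_comp \<omega> w v = \<eta>}"
  proof (intro equalityI subsetI)
    fix w assume "w \<in> {w \<in> permutations_of_multiset (mset u). joint_comp \<omega> w v = \<eta>}"
    then show "w \<in> {w. length w = length v \<and> joint_comp \<omega> w v = \<eta>}"
      using assms(1) by (auto simp: permutations_of_multiset_def dest: mset_eq_length)
  next
    fix w assume w: "w \<in> {w. length w = length v \<and> joint_comp \<omega> w v = \<eta>}"
    then have "comp \<omega> w = comp \<omega> u"
      using True row_sums_joint_comp[of w v] by simp
    then show "w \<in> {w \<in> permutations_of_multiset (mset u). joint_comp \<omega> w v = \<eta>}"
      using w by (simp add: comp_eq_iff_mset_eq permutations_of_multiset_def)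
  qed
  then show ?thesis
    using True assms(2) real_card_words_with_joint_comp[of \<eta> v] by simp
next
  case False
  have "{w \<in> permutations_of_multiset (mset u). joint_comp \<omega> w v = \<eta>} = {}"
  proof (rule ccontr)
    assume "{w \<in> permutations_of_multiset (mset u). joint_comp \<omega> w v = \<eta>} \<noteq> {}"
    then obtain w where w: "mset w = mset u" "joint_comp \<omega> w v = \<eta>"
      by (auto simp: permutations_of_multiset_def)
    then have "length w = length v"
      using assms(1) by (auto dest: mset_eq_length)
    then have "comp \<omega> u = row_sums CARD('a) \<eta> \<and> comp \<omega> v = col_sums CARD('a) \<eta>"
      using w row_sums_joint_comp[of w v] col_sums_joint_comp[of w v] comp_eq_iff_mset_eq[of w u]
      by simp
    with False show False ..
  qed
  then show ?thesis
    unfolding if_not_P[OF False] by simp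
qed

lemma average_joint_comp_indicator:
  assumes "length u = n" "length v = n" "\<eta> \<in> bicomps CARD('a) n"
  shows "(\<Sum>\<sigma> | \<sigma> permutes {0..<n}. of_bool (joint_comp \<omega> (perm_word \<sigma> u) v = \<eta>)) / fact n =
    (if comp \<omega> u = row_sums CARD('a) \<eta> \<and> comp \<omega> v = col_sums CARD('a) \<eta>
     then bicomp_weight CARD('a) n \<eta> else (0::real))"
proof -
  let ?T = "permutations_of_multiset (mset u)"
  have "(\<Sum>w\<in>?T. of_bool (joint_comp \<omega> w v = \<eta>)) = real (card {w \<in> ?T. joint_comp \<omega> w v = \<eta>})"
    by (simp add: Int_def)
  then have "(\<Sum>\<sigma> | \<sigma> permutes {0..<n}. of_bool (joint_comp \<omega> (perm_word \<sigma> u) v = \<eta>)) / fact n =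
      real (card {w \<in> ?T. joint_comp \<omega> w v = \<eta>}) / real (card ?T)"
    using sum_permute_list_divide_fact[of "\<lambda>w. of_bool (joint_comp \<omega> w v = \<eta>) :: real" u]
    by (simp add: assms(1) perm_word_eq_permute_list atLeast0LessThan)
  moreover have "real (card ?T) = multinom n CARD('a) (comp \<omega> u)"
    using assms(1)
    by (simp add: real_card_permutations_of_multiset comp_eq_count cong: multinom_cong)
  ultimately show ?thesis
    using assms by (simp add: real_card_rearrangements_with_joint_comp bicomp_weight_def)
qed

lemma average_joint_monomial:
  assumes "length u = n" "length v = n"
  shows "(\<Sum>\<sigma> | \<sigma> permutes {0..<n}.
      joint_monomial CARD('a) x (joint_comp \<omega> (perm_word \<sigma> u) v)) / fact n =
    (\<Sum>\<eta>\<in>bicomps CARD('a) n. if comp \<omega> u = row_sums CARD('a) \<eta> \<and> comp \<omega> v = col_sums CARD('a) \<eta>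
       then bicomp_weight CARD('a) n \<eta> * joint_monomial CARD('a) x \<eta> else 0)"
proof -
  let ?P = "{\<sigma>. \<sigma> permutes {0..<n}}" and ?B = "bicomps CARD('a) n"
  have "joint_monomial CARD('a) x (joint_comp \<omega> (perm_word \<sigma> u) v) =
      (\<Sum>\<eta>\<in>?B. of_bool (joint_comp \<omega> (perm_word \<sigma> u) v = \<eta>) * joint_monomial CARD('a) x \<eta>)" for \<sigma>
  proof -
    have "joint_comp \<omega> (perm_word \<sigma> u) v \<in> ?B"
      using joint_comp_in_bicomps[of "perm_word \<sigma> u" v] assms(1) by (simp add: perm_word_def)
    then show ?thesis
      using finite_bicomps by (simp add: if_distrib[of "\<lambda>b. b * _"] cong: if_cong)
  qed
  then have "(\<Sum>\<sigma>\<in>?P. joint_monomial CARD('a) x (joint_comp \<omega> (perm_word \<sigma> u) v)) / fact n =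
      (\<Sum>\<eta>\<in>?B. (\<Sum>\<sigma>\<in>?P. of_bool (joint_comp \<omega> (perm_word \<sigma> u) v = \<eta>)) / fact n *
        joint_monomial CARD('a) x \<eta>)"
    by (simp add: sum.swap[of _ ?P] sum_distrib_right sum_divide_distrib)
  also have "\<dots> = (\<Sum>\<eta>\<in>?B. if comp \<omega> u = row_sums CARD('a) \<eta> \<and> comp \<omega> v = col_sums CARD('a) \<eta>
       then bicomp_weight CARD('a) n \<eta> * joint_monomial CARD('a) x \<eta> else 0)"
    using assms by (intro sum.cong refl) (simp add: average_joint_comp_indicator)
  finally show ?thesis .
qed

lemma CJ_av_eq_sum_average:
  assumes "C \<subseteq> {u. length u = n}"
  shows "CJ_av \<omega> n C D x =
    (\<Sum>u\<in>C. \<Sum>v\<in>D. (\<Sum>\<sigma> | \<sigma> permutes {0..<n}.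
      joint_monomial CARD('a) x (joint_comp \<omega> (perm_word \<sigma> u) v)) / fact n)"
proof -
  let ?P = "{\<sigma>. \<sigma> permutes {0..<n}}"
  have "CJE \<omega> (perm_word \<sigma> ` C) D x =
      (\<Sum>u\<in>C. \<Sum>v\<in>D. joint_monomial CARD('a) x (joint_comp \<omega> (perm_word \<sigma> u) v))"
    if "\<sigma> \<in> ?P" for \<sigma>
  proof -
    have "inj_on (perm_word \<sigma>) C"
      using inj_on_permute_list[of \<sigma> n] that assms
      by (auto simp: perm_word_eq_permute_list atLeast0LessThan intro: inj_on_subset)
    then show ?thesis
      unfolding CJE_def joint_monomial_def
      by (simp add: sum.reindex) (intro sum.cong prod.cong refl; simp add: joint_comp_def)
  qed
  then have "CJ_av \<omega> n C D x =
      (\<Sum>\<sigma>\<in>?P. \<Sum>u\<in>C. \<Sum>v\<in>D. joint_monomial CARD('a) x (joint_comp \<omega> (perm_word \<sigma> u) v)) / fact n"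
    by (simp add: CJ_av_def)
  also have "\<dots> =
      (\<Sum>u\<in>C. \<Sum>v\<in>D. \<Sum>\<sigma>\<in>?P. joint_monomial CARD('a) x (joint_comp \<omega> (perm_word \<sigma> u) v)) / fact n"
    by (subst sum.swap) (simp add: sum.swap[of _ ?P])
  finally show ?thesis
    by (simp add: sum_divide_distrib)
qed

end

theorem theorem3p1:
  fixes \<omega> :: "nat \<Rightarrow> 'a::{finite,comm_ring_1}"
    and n :: nat and C D :: "'a list set" and x :: "nat \<Rightarrow> nat \<Rightarrow> real"
  assumes "is_Fq_or_Zk TYPE('a)"
    and "alphabet_order \<omega>"
    and "linear_code n C" and "linear_code n D"
  shows "CJ_av \<omega> n C D x =
    (\<Sum>\<eta>\<in>bicomps (card (UNIV :: 'a set)) n.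
       (let r = (\<lambda>i. \<Sum>j<card (UNIV :: 'a set). \<eta> i j); s = (\<lambda>i. \<Sum>j<card (UNIV :: 'a set). \<eta> j i) in
        real (A_count \<omega> C r) * real (A_count \<omega> D s) *
        ((\<Prod>i<card (UNIV :: 'a set). multinom (s i) (card (UNIV :: 'a set)) (\<lambda>j. \<eta> j i)) / multinom n (card (UNIV :: 'a set)) r) *
        (\<Prod>i<card (UNIV :: 'a set). \<Prod>j<card (UNIV :: 'a set). x i j ^ \<eta> i j)))"
proof -
  interpret ordered_alphabet \<omega>
    by (rule ordered_alphabet.intro) (fact assms(2))
  let ?B = "bicomps CARD('a) n"
  let ?summand = "\<lambda>\<eta> u v. if comp \<omega> u = row_sums CARD('a) \<eta> \<and> comp \<omega> v = col_sums CARD('a) \<eta>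
    then bicomp_weight CARD('a) n \<eta> * joint_monomial CARD('a) x \<eta> else 0"
  have words: "C \<subseteq> {u. length u = n}" "D \<subseteq> {v. length v = n}"
    using assms(3,4) by (simp_all add: linear_code_def)
  then have finite: "finite C" "finite D"
    using finite_lists_length_eq[of "UNIV :: 'a set" n] by (auto intro: finite_subset)
  have "CJ_av \<omega> n C D x = (\<Sum>u\<in>C. \<Sum>v\<in>D. \<Sum>\<eta>\<in>?B. ?summand \<eta> u v)"
    unfolding CJ_av_eq_sum_average[OF words(1)]
    using words by (intro sum.cong refl average_joint_monomial) auto
  also have "\<dots> = (\<Sum>\<eta>\<in>?B. \<Sum>u\<in>C. \<Sum>v\<in>D. ?summand \<eta> u v)"
    by (subst sum.swap) (intro sum.cong refl sum.swap)
  also have "\<dots> = (\<Sum>\<eta>\<in>?B.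
      real (A_count \<omega> C (row_sums CARD('a) \<eta>)) * real (A_count \<omega> D (col_sums CARD('a) \<eta>)) *
      (bicomp_weight CARD('a) n \<eta> * joint_monomial CARD('a) x \<eta>))"
    using finite by (simp add: sum_sum_if_conj A_count_def)
  finally show ?thesis
    by (simp add: Let_def bicomp_weight_def joint_monomial_def row_sums_def[abs_def]
        col_sums_def[abs_def] mult.assoc)
qed

end
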